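(* Fix $\epsilon>0$ and define the relation $P$ on $\mathbb R$ by $(x,y)\in P\iff x+\epsilon\geq y$. Let $\chi$ be the indicator function of the open interval $(-1,1)$, let $f(t)=t+(1-t^2)\chi(t)$, and let $\mathcal V=\{v_\alpha:\alpha\in\mathbb R\}$ where $v_\alpha(x)=f\big(\tfrac{x-\alpha}{\epsilon}\big)$. Then each $v_\alpha$ is continuous, $P$ is complete and negatively transitive but not transitive, and for all $x,y\in\mathbb R$: $(x,y)\in P\iff\exists\alpha\in\mathbb R,\ v_\alpha(x)\geq v_\alpha(y)$.
   Context: $P$ is complete if for all $x,y$, $(x,y)\in P$ or $(y,x)\in P$; negatively transitive if $(x,y)\notin P$ and $(y,z)\notin P$ imply $(x,z)\notin P$; transitive if $(x,y),(y,z)\in P$ imply $(x,z)\in P$. *)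

theory Defs
  imports Complex_Main "HOL-Library.Indicator_Function"
begin

definition complete_rel :: "'a rel \<Rightarrow> bool" where
  "complete_rel P \<longleftrightarrow> (\<forall>x y. (x, y) \<in> P \<or> (y, x) \<in> P)"

definition neg_trans :: "'a rel \<Rightarrow> bool" where
  "neg_trans P \<longleftrightarrow> (\<forall>x y z. (x, y) \<notin> P \<longrightarrow> (y, z) \<notin> P \<longrightarrow> (x, z) \<notin> P)"

end

theory Submission
  imports Defs
begin

text \<open>Incomparability under \<open>P\<close> fails to be transitive because two steps of size \<open>\<epsilon>\<close>
  add up to \<open>2\<epsilon>\<close>. After rescaling by \<open>\<epsilon>\<close> the utilities are translates of
  \<open>f t = t + max 0 (1 - t\<^sup>2)\<close>, the identity plus a continuous bump, so \<open>t \<le> f t \<le> t + 1\<close>.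
  These bounds show that \<open>f (x - a) \<ge> f (y - a)\<close> forces \<open>y \<le> x + 1\<close>; conversely, if
  \<open>y \<le> x + 1\<close> the shift \<open>a = y - 1\<close> puts \<open>y\<close> at the right foot of the bump, where
  \<open>f\<close> takes the value \<open>1\<close>, while \<open>f (x - a) \<ge> 1\<close>.\<close>

definition threshold_rel :: "'a::linordered_ab_group_add \<Rightarrow> 'a rel" where
  "threshold_rel \<epsilon> = {(x, y). x + \<epsilon> \<ge> y}"

lemma complete_threshold_rel:
  assumes "\<epsilon> \<ge> 0"
  shows "complete_rel (threshold_rel \<epsilon>)"
  unfolding complete_rel_def threshold_rel_def
proof (intro allI)
  fix x y :: 'a
  have "y \<le> x \<or> x \<le> y" by (rule linear)
  then show "(x, y) \<in> {(x, y). y \<le> x + \<epsilon>} \<or> (y, x) \<in> {(x, y). y \<le> x + \<epsilon>}"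
    using assms by (auto intro: add_increasing2)
qed

lemma neg_trans_threshold_rel:
  assumes "\<epsilon> \<ge> 0"
  shows "neg_trans (threshold_rel \<epsilon>)"
  unfolding neg_trans_def threshold_rel_def
proof (clarsimp simp: not_le)
  fix x y z :: 'a
  assume "x + \<epsilon> < y" "y + \<epsilon> < z"
  then have "x + \<epsilon> + \<epsilon> < z" by (meson add_strict_right_mono order.strict_trans)
  moreover have "x + \<epsilon> \<le> x + \<epsilon> + \<epsilon>" using assms by simp
  ultimately show "x + \<epsilon> < z" by order
qed

lemma not_trans_threshold_rel: "\<epsilon> > 0 \<Longrightarrow> \<not> trans (threshold_rel \<epsilon>)"
proof
  assume "\<epsilon> > 0" and "trans (threshold_rel \<epsilon>)"
  moreover have "(0, \<epsilon>) \<in> threshold_rel \<epsilon>" "(\<epsilon>, \<epsilon> + \<epsilon>) \<in> threshold_rel \<epsilon>"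
    by (simp_all add: threshold_rel_def)
  ultimately have "(0, \<epsilon> + \<epsilon>) \<in> threshold_rel \<epsilon>" by (blast dest: transD)
  with \<open>\<epsilon> > 0\<close> show False
    by (simp add: threshold_rel_def)
qed

definition bump :: "real \<Rightarrow> real" where
  "bump t = t + max 0 (1 - t\<^sup>2)"

lemma bump_eq_indicator: "bump t = t + (1 - t\<^sup>2) * indicator {-1<..<1} t"
proof (cases "\<bar>t\<bar> < 1")
  case True
  then have "t\<^sup>2 < 1" by (simp add: abs_square_less_1)
  moreover from True have "t \<in> {-1<..<1}" by (simp add: abs_less_iff)
  ultimately show ?thesis by (simp add: bump_def)
next
  case False
  then have "t\<^sup>2 \<ge> 1" using abs_square_less_1[of t] by linarith
  moreover from False have "t \<notin> {-1<..<1}" by (auto split: abs_split)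
  ultimately show ?thesis by (simp add: bump_def)
qed

lemma bump_ge: "t \<le> bump t"
  by (simp add: bump_def)

lemma bump_le: "bump t \<le> t + 1"
  by (simp add: bump_def)

lemma bump_ge_1: "0 \<le> t \<Longrightarrow> t \<le> 1 \<Longrightarrow> 1 \<le> bump t"
  using mult_left_le_one_le[of t t] by (simp add: bump_def power2_eq_square)

lemma continuous_on_bump: "continuous_on UNIV bump"
  unfolding bump_def by (intro continuous_intros)

lemma threshold_iff_bump_shift: "y \<le> x + 1 \<longleftrightarrow> (\<exists>a. bump (x - a) \<ge> bump (y - a))"
proof
  assume "y \<le> x + 1"
  have "1 \<le> bump (x - (y - 1))"
  proof (cases "x - (y - 1) \<le> 1")
    case True
    with \<open>y \<le> x + 1\<close> show ?thesis by (simp add: bump_ge_1)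
  next
    case False
    with bump_ge[of "x - (y - 1)"] show ?thesis by linarith
  qed
  moreover have "bump (y - (y - 1)) = 1"
    by (simp add: bump_def)
  ultimately show "\<exists>a. bump (x - a) \<ge> bump (y - a)"
    by (intro exI[of _ "y - 1"]) simp
next
  assume "\<exists>a. bump (x - a) \<ge> bump (y - a)"
  then obtain a where "bump (x - a) \<ge> bump (y - a)" by blast
  then show "y \<le> x + 1"
    using bump_ge[of "y - a"] bump_le[of "x - a"] by linarith
qed

lemma threshold_rel_iff_scaled_bump:
  assumes "\<epsilon> > 0"
  shows "(x, y) \<in> threshold_rel \<epsilon> \<longleftrightarrow> (\<exists>\<alpha>. bump ((x - \<alpha>) / \<epsilon>) \<ge> bump ((y - \<alpha>) / \<epsilon>))"
proof -
  have "(x, y) \<in> threshold_rel \<epsilon> \<longleftrightarrow> y / \<epsilon> \<le> x / \<epsilon> + 1"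
    using assms by (simp add: threshold_rel_def field_simps)
  also have "\<dots> \<longleftrightarrow> (\<exists>a. bump (x / \<epsilon> - a) \<ge> bump (y / \<epsilon> - a))"
    by (rule threshold_iff_bump_shift)
  also have "\<dots> \<longleftrightarrow> (\<exists>\<alpha>. bump (x / \<epsilon> - \<alpha> / \<epsilon>) \<ge> bump (y / \<epsilon> - \<alpha> / \<epsilon>))"
  proof
    assume "\<exists>a. bump (x / \<epsilon> - a) \<ge> bump (y / \<epsilon> - a)"
    then obtain a where "bump (x / \<epsilon> - a) \<ge> bump (y / \<epsilon> - a)" ..
    moreover have "(a * \<epsilon>) / \<epsilon> = a" using assms by simp
    ultimately show "\<exists>\<alpha>. bump (x / \<epsilon> - \<alpha> / \<epsilon>) \<ge> bump (y / \<epsilon> - \<alpha> / \<epsilon>)"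
      by metis
  qed blast
  finally show ?thesis
    by (simp add: diff_divide_distrib)
qed

theorem mainTheorem4:
  fixes \<epsilon> :: real
    and P :: "real rel"
    and \<chi> f :: "real \<Rightarrow> real"
    and v :: "real \<Rightarrow> real \<Rightarrow> real"
  assumes "\<epsilon> > 0"
    and "P = {(x, y). x + \<epsilon> \<ge> y}"
    and "\<chi> = indicator {-1<..<1}"
    and "\<And>t. f t = t + (1 - t\<^sup>2) * \<chi> t"
    and "\<And>\<alpha> x. v \<alpha> x = f ((x - \<alpha>) / \<epsilon>)"
  shows "(\<forall>\<alpha>. continuous_on UNIV (v \<alpha>))
    \<and> complete_rel P \<and> neg_trans P \<and> \<not> trans P
    \<and> (\<forall>x y. (x, y) \<in> P \<longleftrightarrow> (\<exists>\<alpha>. v \<alpha> x \<ge> v \<alpha> y))"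
proof -
  have P: "P = threshold_rel \<epsilon>"
    using assms(2) by (simp add: threshold_rel_def)
  have v: "v \<alpha> = (\<lambda>x. bump ((x - \<alpha>) / \<epsilon>))" for \<alpha>
    using assms(3-5) by (simp add: fun_eq_iff bump_eq_indicator)
  have "continuous_on UNIV (v \<alpha>)" for \<alpha>
    unfolding v by (rule continuous_on_compose2[OF continuous_on_bump])
      (use assms(1) in \<open>auto intro!: continuous_intros\<close>)
  moreover have "(x, y) \<in> P \<longleftrightarrow> (\<exists>\<alpha>. v \<alpha> x \<ge> v \<alpha> y)" for x y
    unfolding P v by (rule threshold_rel_iff_scaled_bump[OF assms(1)])
  moreover have "complete_rel P" "neg_trans P" "\<not> trans P"
    unfolding P using assms(1)
    by (simp_all add: complete_threshold_rel neg_trans_threshold_rel not_trans_threshold_rel)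
  ultimately show ?thesis by blast
qed

end
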